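(* Assume the setting in the context, with $a<t_1<\dots<t_n<b$, $n>m$, $T$ ($T[i,j]=u_j(t_i)$) of full column rank $m$, $K$ ($K[i,j]=R_1(t_i,t_j)$) invertible, $D$ diagonal with positive entries $d_i$, $\lambda>0$, and $M=K+\lambda D^{-1}$. Let $Q$ be an $n\times(n-m)$ matrix of full column rank such that $Q'T=0$ and $Q_{ij}=0$ unless $i\in\{j,j+1,\dots,j+m\}$. Then: (i) $[Q'MQ]_{kl}=0$ whenever $|k-l|>m$ (i.e. $Q'MQ$ is banded with bandwidth $m$), and in fact $[Q'KQ]_{kl}=0$ and $[Q'D^{-1}Q]_{kl}=0$ for $|k-l|>m$; (ii) the unique minimizer $(\hat\alpha,\hat\beta)$ of $(\mathbf Y-T\alpha-K\beta)'D(\mathbf Y-T\alpha-K\beta)+\lambda\beta'K\beta$ satisfies $T'\hat\beta=0$, $$\hat\beta=Q(Q'MQ)^{-1}Q'\mathbf Y,\qquad\hat\alpha=(T'T)^{-1}T'(\mathbf Y-M\hat\beta),$$ and the fitted vector $\hat{\mathbf Y}=T\hat\alpha+K\hat\beta$ equals $\mathbf Y-\lambda D^{-1}\hat\beta$.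
   Context: $[a,b]$ is a finite interval, $m\ge1$, $w_0,\dots,w_{m-1}$ continuous real functions on $[a,b]$, $(L\mu)(t)=\mu^{(m)}(t)+\sum_{j=0}^{m-1}w_j(t)\mu^{(j)}(t)$. $u_1,\dots,u_m$ are real, $m$ times differentiable functions forming a basis of $\{\mu:L\mu\equiv0\}$, with Wronskian $[W(t)]_{ij}=u_i^{(j-1)}(t)$ invertible for all $t\in[a,b]$; $(u_1^*(t),\dots,u_m^*(t))$ is the last row of $W(t)^{-1}$. The Green's function is $\mathcal G(t,u)=\sum_{i=1}^mu_i(t)u_i^*(u)$ for $u\le t$ and $0$ otherwise, and $R_1(s,t)=\int_a^b\mathcal G(s,u)\mathcal G(t,u)\,du$. $\mathbf Y=(Y_1,\dots,Y_n)'\in\mathbb R^n$. *)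

theory Defs
  imports "HOL-Analysis.Henstock_Kurzweil_Integration"
          "Jordan_Normal_Form.Gauss_Jordan_Elimination"
          "Jordan_Normal_Form.DL_Rank"
begin

text \<open>All indices are 0-based: functions u 0, ..., u (m-1); points t 0 < ... < t (n-1);
  matrix entries A $$ (i,j) with i, j starting at 0.\<close>

definition has_derivs_on :: "nat \<Rightarrow> (nat \<Rightarrow> real \<Rightarrow> real) \<Rightarrow> real set \<Rightarrow> bool" where
  "has_derivs_on k D S \<longleftrightarrow>
     (\<forall>j<k. \<forall>x\<in>S. (D j has_real_derivative D (Suc j) x) (at x within S))"

definition L_annihilates :: "real \<Rightarrow> real \<Rightarrow> nat \<Rightarrow> (nat \<Rightarrow> real \<Rightarrow> real) \<Rightarrow> (nat \<Rightarrow> real \<Rightarrow> real) \<Rightarrow> bool" where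
  "L_annihilates a b m w D \<longleftrightarrow> has_derivs_on m D {a..b} \<and>
     (\<forall>x\<in>{a..b}. D m x + (\<Sum>j<m. w j x * D j x) = 0)"

definition in_ker_L :: "real \<Rightarrow> real \<Rightarrow> nat \<Rightarrow> (nat \<Rightarrow> real \<Rightarrow> real) \<Rightarrow> (real \<Rightarrow> real) \<Rightarrow> bool" where
  "in_ker_L a b m w \<mu> \<longleftrightarrow> (\<exists>D. (\<forall>x\<in>{a..b}. D 0 x = \<mu> x) \<and> L_annihilates a b m w D)"

definition is_ker_basis :: "real \<Rightarrow> real \<Rightarrow> nat \<Rightarrow> (nat \<Rightarrow> real \<Rightarrow> real) \<Rightarrow> (nat \<Rightarrow> real \<Rightarrow> real)
    \<Rightarrow> (nat \<Rightarrow> nat \<Rightarrow> real \<Rightarrow> real) \<Rightarrow> bool" where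
  "is_ker_basis a b m w u Du \<longleftrightarrow>
     (\<forall>i<m. (\<forall>x\<in>{a..b}. Du i 0 x = u i x) \<and> L_annihilates a b m w (Du i)) \<and>
     (\<forall>c::nat \<Rightarrow> real. (\<forall>x\<in>{a..b}. (\<Sum>i<m. c i * u i x) = 0) \<longrightarrow> (\<forall>i<m. c i = 0)) \<and>
     (\<forall>\<mu>. in_ker_L a b m w \<mu> \<longrightarrow> (\<exists>c::nat \<Rightarrow> real. \<forall>x\<in>{a..b}. \<mu> x = (\<Sum>i<m. c i * u i x)))"

definition minv :: "real mat \<Rightarrow> real mat" where
  "minv A = the (mat_inverse A)"

definition wronskian :: "nat \<Rightarrow> (nat \<Rightarrow> nat \<Rightarrow> real \<Rightarrow> real) \<Rightarrow> real \<Rightarrow> real mat" where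
  "wronskian m Du x = mat m m (\<lambda>(i,j). Du i j x)"

definition ustar :: "nat \<Rightarrow> (nat \<Rightarrow> nat \<Rightarrow> real \<Rightarrow> real) \<Rightarrow> nat \<Rightarrow> real \<Rightarrow> real" where
  "ustar m Du i x = minv (wronskian m Du x) $$ (m - 1, i)"

definition green :: "nat \<Rightarrow> (nat \<Rightarrow> real \<Rightarrow> real) \<Rightarrow> (nat \<Rightarrow> nat \<Rightarrow> real \<Rightarrow> real) \<Rightarrow> real \<Rightarrow> real \<Rightarrow> real" where
  "green m u Du x s = (if s \<le> x then (\<Sum>i<m. u i x * ustar m Du i s) else 0)"

definition R1 :: "real \<Rightarrow> real \<Rightarrow> nat \<Rightarrow> (nat \<Rightarrow> real \<Rightarrow> real) \<Rightarrow> (nat \<Rightarrow> nat \<Rightarrow> real \<Rightarrow> real) \<Rightarrow> real \<Rightarrow> real \<Rightarrow> real" where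
  "R1 a b m u Du s x = integral {a..b} (\<lambda>v. green m u Du s v * green m u Du x v)"

definition ridge_obj :: "real vec \<Rightarrow> real mat \<Rightarrow> real mat \<Rightarrow> real mat \<Rightarrow> real \<Rightarrow> real vec \<Rightarrow> real vec \<Rightarrow> real" where
  "ridge_obj Y T K D lam \<alpha> \<beta> =
     (Y - T *\<^sub>v \<alpha> - K *\<^sub>v \<beta>) \<bullet> (D *\<^sub>v (Y - T *\<^sub>v \<alpha> - K *\<^sub>v \<beta>)) + lam * (\<beta> \<bullet> (K *\<^sub>v \<beta>))"

definition is_ridge_minimizer :: "nat \<Rightarrow> nat \<Rightarrow> real vec \<Rightarrow> real mat \<Rightarrow> real mat \<Rightarrow> real mat \<Rightarrow> real
    \<Rightarrow> real vec \<times> real vec \<Rightarrow> bool" where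
  "is_ridge_minimizer n m Y T K D lam p \<longleftrightarrow>
     fst p \<in> carrier_vec m \<and> snd p \<in> carrier_vec n \<and>
     (\<forall>\<alpha>\<in>carrier_vec m. \<forall>\<beta>\<in>carrier_vec n.
        ridge_obj Y T K D lam (fst p) (snd p) \<le> ridge_obj Y T K D lam \<alpha> \<beta>)"

end

theory Submission
  imports Defs
begin

text \<open>
  (i) An entry (k,l) of Q'AQ is the bilinear form of A on columns k and l of Q. For the diagonal
  matrix D^-1 it vanishes when the index bands [k, k+m] and [l, l+m] of the two columns are
  disjoint. The matrix K is the Gram matrix of the functions G(t_i, .) in L2[a,b], so the entry
  is the inner product of g_k = sum_i Q_ik G(t_i, .) and g_l. Since Q'T = 0 the terms of g_k
  cancel to the left of t_k, and since G is causal they vanish to the right of t_(k+m); hence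
  g_k g_l = 0 whenever |k - l| > m.

  (ii) K is positive semidefinite as a Gram matrix, hence positive definite being invertible,
  so M = K + lam D^-1 is positive definite and Q'MQ, T'T are nonsingular. By a rank count the
  columns of Q span the orthogonal complement of the range of T; this shows that the explicit
  beta and alpha solve T'beta = 0 and T alpha + M beta = Y. Completing the square shows that such
  a pair is the unique minimizer, and the fitted-value formula is a rewriting of the normal
  equations.
\<close>

section \<open>Inverses of matrices\<close>

lemma minv_props:
  fixes A :: "real mat"
  assumes A: "A \<in> carrier_mat n n" and d: "det A \<noteq> 0"
  shows "minv A \<in> carrier_mat n n" "A * minv A = 1\<^sub>m n" "minv A * A = 1\<^sub>m n"
proof -
  have U: "A \<in> Units (ring_mat TYPE(real) n ())" by (rule det_non_zero_imp_unit[OF A d])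
  have "mat_inverse A \<noteq> None"
  proof
    assume "mat_inverse A = None"
    from mat_inverse(1)[OF A this, where b="()"] U show False by simp
  qed
  then obtain B where B: "mat_inverse A = Some B" by auto
  have "minv A = B" unfolding minv_def B by simp
  then show "minv A \<in> carrier_mat n n" "A * minv A = 1\<^sub>m n" "minv A * A = 1\<^sub>m n"
    using mat_inverse(2)[OF A B] by auto
qed

lemma minv_unique:
  fixes A B :: "real mat"
  assumes A: "A \<in> carrier_mat n n" and d: "det A \<noteq> 0" and B: "B \<in> carrier_mat n n"
    and AB: "A * B = 1\<^sub>m n"
  shows "minv A = B"
proof -
  note p = minv_props[OF A d]
  have "minv A = minv A * (A * B)" using p(1) AB by simp
  also have "\<dots> = (minv A * A) * B" using p(1) A B by (simp add: assoc_mult_mat)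
  also have "\<dots> = B" using p(3) B by simp
  finally show ?thesis .
qed

lemma det_nonzero_if_injective:
  fixes A :: "real mat"
  assumes A: "A \<in> carrier_mat n n"
    and inj: "\<And>v. v \<in> carrier_vec n \<Longrightarrow> A *\<^sub>v v = 0\<^sub>v n \<Longrightarrow> v = 0\<^sub>v n"
  shows "det A \<noteq> 0"
  using det_0_iff_vec_prod_zero_field[OF A] inj by blast

lemma det_nonzero_if_right_inverse:
  fixes A B :: "real mat"
  assumes A: "A \<in> carrier_mat n n" and B: "B \<in> carrier_mat n n" and AB: "A * B = 1\<^sub>m n"
  shows "det A \<noteq> 0"
proof -
  have "det A * det B = 1" using det_mult[OF A B] AB by simp
  then show ?thesis by auto
qed

lemma invertible_det_nonzero:
  fixes A :: "real mat"
  assumes A: "A \<in> carrier_mat n n" and inv: "invertible_mat A"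
  shows "det A \<noteq> 0"
proof -
  from inv obtain B where AB: "A * B = 1\<^sub>m n" and BA: "B * A = 1\<^sub>m (dim_row B)"
    using A unfolding invertible_mat_def inverts_mat_def by auto
  have "dim_col B = n" using AB A by (metis index_mult_mat(3) index_one_mat(3))
  moreover have "dim_row B = n" using BA A by (metis carrier_matD(2) index_mult_mat(3) index_one_mat(3))
  ultimately have "B \<in> carrier_mat n n" by auto
  then show ?thesis using det_nonzero_if_right_inverse[OF A _ AB] by blast
qed

lemma minv_adj:
  fixes A :: "real mat"
  assumes A: "A \<in> carrier_mat n n" and d: "det A \<noteq> 0"
  shows "minv A = (1 / det A) \<cdot>\<^sub>m adj_mat A"
proof (rule minv_unique[OF A d])
  show "(1 / det A) \<cdot>\<^sub>m adj_mat A \<in> carrier_mat n n" using adj_mat(1)[OF A] by simp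
  have "A * ((1 / det A) \<cdot>\<^sub>m adj_mat A) = (1 / det A) \<cdot>\<^sub>m (A * adj_mat A)"
    using mult_smult_distrib[OF A adj_mat(1)[OF A]] by simp
  also have "\<dots> = (1 / det A) \<cdot>\<^sub>m (det A \<cdot>\<^sub>m 1\<^sub>m n)" using adj_mat(2)[OF A] by simp
  also have "\<dots> = 1\<^sub>m n" using d by (intro eq_matI) auto
  finally show "A * ((1 / det A) \<cdot>\<^sub>m adj_mat A) = 1\<^sub>m n" .
qed

lemma diagonal_mult_entry:
  fixes D E :: "real mat"
  assumes D: "D \<in> carrier_mat n n" and diag: "diagonal_mat D" and E: "E \<in> carrier_mat n nc"
    and i: "i < n" and j: "j < nc"
  shows "(D * E) $$ (i,j) = D $$ (i,i) * E $$ (i,j)"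
proof -
  have "(D * E) $$ (i,j) = (\<Sum>k\<in>{0..<n}. D $$ (i,k) * E $$ (k,j))"
    using D E i j by (simp add: scalar_prod_def)
  also have "\<dots> = (\<Sum>k\<in>{0..<n}. if k = i then D $$ (i,i) * E $$ (i,j) else 0)"
    by (rule sum.cong[OF refl]) (use diag D i in \<open>auto simp: diagonal_mat_def\<close>)
  also have "\<dots> = D $$ (i,i) * E $$ (i,j)" using i by simp
  finally show ?thesis .
qed

lemma minv_diagonal:
  fixes D :: "real mat"
  assumes D: "D \<in> carrier_mat n n" and diag: "diagonal_mat D" and pos: "\<forall>i<n. D $$ (i,i) > 0"
  shows "minv D \<in> carrier_mat n n" "D * minv D = 1\<^sub>m n" "diagonal_mat (minv D)"
    "\<forall>i<n. minv D $$ (i,i) > 0"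
proof -
  define E where "E = mat n n (\<lambda>(i,j). if i = j then 1 / D $$ (i,i) else 0)"
  have E: "E \<in> carrier_mat n n" unfolding E_def by simp
  have DE: "D * E = 1\<^sub>m n"
  proof (rule eq_matI)
    fix i j assume "i < dim_row (1\<^sub>m n :: real mat)" "j < dim_col (1\<^sub>m n :: real mat)"
    then have i: "i < n" and j: "j < n" by auto
    show "(D * E) $$ (i,j) = 1\<^sub>m n $$ (i,j)"
      unfolding diagonal_mult_entry[OF D diag E i j] using i j pos by (cases "i = j") (auto simp: E_def)
  qed (use D E in auto)
  have "minv D = E" 
    by (rule minv_unique[OF D det_nonzero_if_right_inverse[OF D E DE] E DE])
  then show "minv D \<in> carrier_mat n n" "D * minv D = 1\<^sub>m n" "diagonal_mat (minv D)"
    "\<forall>i<n. minv D $$ (i,i) > 0"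
    using E DE pos unfolding E_def diagonal_mat_def by auto
qed

lemma diagonal_transpose:
  fixes D :: "real mat"
  assumes D: "D \<in> carrier_mat n n" and diag: "diagonal_mat D"
  shows "transpose_mat D = D"
proof (rule eq_matI)
  fix i j assume i: "i < dim_row D" and j: "j < dim_col D"
  show "transpose_mat D $$ (i,j) = D $$ (i,j)"
    using i j D diag unfolding diagonal_mat_def by (cases "i = j") auto
qed (use D in auto)

lemma smult_mat_mult_vec:
  fixes A :: "real mat"
  assumes A: "A \<in> carrier_mat nr nc" and v: "v \<in> carrier_vec nc"
  shows "(c \<cdot>\<^sub>m A) *\<^sub>v v = c \<cdot>\<^sub>v (A *\<^sub>v v)"
  by (rule eq_vecI) (use A v in \<open>auto simp: scalar_prod_def sum_distrib_left ac_simps\<close>)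

lemma mult_mat_vec_zero:
  fixes A :: "real mat"
  assumes "A \<in> carrier_mat nr nc"
  shows "A *\<^sub>v 0\<^sub>v nc = 0\<^sub>v nr"
  by (rule eq_vecI) (use assms in auto)

lemma diagonal_mult_vec:
  fixes D :: "real mat"
  assumes D: "D \<in> carrier_mat n n" and diag: "diagonal_mat D" and v: "v \<in> carrier_vec n"
  shows "D *\<^sub>v v = vec n (\<lambda>i. D $$ (i,i) * v $ i)"
proof (rule eq_vecI)
  fix i assume "i < dim_vec (vec n (\<lambda>i. D $$ (i,i) * v $ i))"
  then have i: "i < n" by simp
  have "(D *\<^sub>v v) $ i = (\<Sum>j<n. D $$ (i,j) * v $ j)"
    using D v i by (simp add: scalar_prod_def lessThan_atLeast0)
  also have "\<dots> = (\<Sum>j<n. if j = i then D $$ (i,i) * v $ i else 0)"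
    by (rule sum.cong[OF refl]) (use diag D i in \<open>auto simp: diagonal_mat_def\<close>)
  also have "\<dots> = D $$ (i,i) * v $ i" using i by simp
  finally show "(D *\<^sub>v v) $ i = vec n (\<lambda>i. D $$ (i,i) * v $ i) $ i" using i by simp
qed (use D in auto)

lemma vec_diff_zero_eq:
  fixes x y :: "real vec"
  assumes x: "x \<in> carrier_vec n" and y: "y \<in> carrier_vec n" and diff: "x - y = 0\<^sub>v n"
  shows "x = y"
proof (rule eq_vecI)
  fix i assume "i < dim_vec y"
  then have "(x - y) $ i = 0" using diff y by simp
  then show "x $ i = y $ i" using \<open>i < dim_vec y\<close> x y by simp
qed (use x y in simp)

section \<open>Positive definite matrices\<close>

text \<open>Positive definiteness of a real n x n matrix, stated via its quadratic form (no symmetry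
  required).\<close>

definition pos_def :: "nat \<Rightarrow> real mat \<Rightarrow> bool" where
  "pos_def n M \<longleftrightarrow>
     (\<forall>x\<in>carrier_vec n. 0 \<le> x \<bullet> (M *\<^sub>v x) \<and> (x \<bullet> (M *\<^sub>v x) = 0 \<longrightarrow> x = 0\<^sub>v n))"

lemma pos_defD:
  assumes "pos_def n M" and "x \<in> carrier_vec n"
  shows "0 \<le> x \<bullet> (M *\<^sub>v x)" "x \<bullet> (M *\<^sub>v x) = 0 \<Longrightarrow> x = 0\<^sub>v n"
  using assms unfolding pos_def_def by auto

lemma pos_def_diagonal:
  fixes D :: "real mat"
  assumes D: "D \<in> carrier_mat n n" and diag: "diagonal_mat D" and pos: "\<forall>i<n. D $$ (i,i) > 0"
  shows "pos_def n D"
  unfolding pos_def_def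
proof (intro ballI conjI impI)
  fix x :: "real vec" assume x: "x \<in> carrier_vec n"
  have "x \<bullet> (D *\<^sub>v x) = (\<Sum>i\<in>{0..<n}. x $ i * (D $$ (i,i) * x $ i))"
    using x unfolding diagonal_mult_vec[OF D diag x] scalar_prod_def by simp
  also have "\<dots> = (\<Sum>i\<in>{0..<n}. D $$ (i,i) * (x $ i * x $ i))"
    by (rule sum.cong[OF refl]) (simp only: mult.left_commute)
  finally have form: "x \<bullet> (D *\<^sub>v x) = (\<Sum>i\<in>{0..<n}. D $$ (i,i) * (x $ i * x $ i))" .
  have terms_nonneg: "\<And>i. i \<in> {0..<n} \<Longrightarrow> 0 \<le> D $$ (i,i) * (x $ i * x $ i)"
    using pos by auto
  show "0 \<le> x \<bullet> (D *\<^sub>v x)" unfolding form by (rule sum_nonneg) (rule terms_nonneg)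
  assume "x \<bullet> (D *\<^sub>v x) = 0"
  then have terms_zero: "\<forall>i\<in>{0..<n}. D $$ (i,i) * (x $ i * x $ i) = 0"
    unfolding form using sum_nonneg_eq_0_iff[of "{0..<n}" "\<lambda>i. D $$ (i,i) * (x $ i * x $ i)"]
      terms_nonneg by simp
  have "x $ i = 0" if i: "i < n" for i
  proof -
    have "D $$ (i,i) * (x $ i * x $ i) = 0" using terms_zero i by simp
    moreover have "D $$ (i,i) \<noteq> 0" using pos i by auto
    ultimately show ?thesis by simp
  qed
  then show "x = 0\<^sub>v n" using x by (intro eq_vecI) auto
qed

lemma pos_def_one: "pos_def n (1\<^sub>m n)"
  by (rule pos_def_diagonal) (auto simp: diagonal_mat_def)

lemma pos_def_add_smult:
  fixes A B :: "real mat"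
  assumes A: "A \<in> carrier_mat n n" and B: "B \<in> carrier_mat n n"
    and pdA: "pos_def n A" and pdB: "pos_def n B" and c: "c > 0"
  shows "pos_def n (A + c \<cdot>\<^sub>m B)"
  unfolding pos_def_def
proof (intro ballI conjI impI)
  fix x :: "real vec" assume x: "x \<in> carrier_vec n"
  have form: "x \<bullet> ((A + c \<cdot>\<^sub>m B) *\<^sub>v x) = x \<bullet> (A *\<^sub>v x) + c * (x \<bullet> (B *\<^sub>v x))"
    using A B x by (simp add: add_mult_distrib_mat_vec[of _ n n] smult_mat_mult_vec[OF B x]
        scalar_prod_add_distrib[of _ n])
  note nonneg = pos_defD(1)[OF pdA x] pos_defD(1)[OF pdB x]
  show "0 \<le> x \<bullet> ((A + c \<cdot>\<^sub>m B) *\<^sub>v x)" unfolding form using nonneg c by simp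
  assume "x \<bullet> ((A + c \<cdot>\<^sub>m B) *\<^sub>v x) = 0"
  moreover have "0 \<le> c * (x \<bullet> (B *\<^sub>v x))" using nonneg c by simp
  ultimately have "x \<bullet> (A *\<^sub>v x) = 0" unfolding form using nonneg by linarith
  then show "x = 0\<^sub>v n" by (rule pos_defD(2)[OF pdA x])
qed

lemma symmetric_form:
  fixes S :: "real mat"
  assumes S: "S \<in> carrier_mat n n" and sym: "transpose_mat S = S"
    and x: "x \<in> carrier_vec n" and y: "y \<in> carrier_vec n"
  shows "x \<bullet> (S *\<^sub>v y) = y \<bullet> (S *\<^sub>v x)"
proof -
  have "y \<bullet> (S *\<^sub>v x) = (transpose_mat S *\<^sub>v y) \<bullet> x"
    using transpose_vec_mult_scalar[OF S x y] by simp
  also have "\<dots> = x \<bullet> (S *\<^sub>v y)" using sym comm_scalar_prod[of "S *\<^sub>v y" n x] S x y by simp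
  finally show ?thesis by simp
qed

lemma quadratic_form_add:
  fixes S :: "real mat"
  assumes S: "S \<in> carrier_mat n n" and sym: "transpose_mat S = S"
    and x: "x \<in> carrier_vec n" and y: "y \<in> carrier_vec n"
  shows "(x + y) \<bullet> (S *\<^sub>v (x + y)) = x \<bullet> (S *\<^sub>v x) + 2 * (y \<bullet> (S *\<^sub>v x)) + y \<bullet> (S *\<^sub>v y)"
proof -
  have Sx: "S *\<^sub>v x \<in> carrier_vec n" and Sy: "S *\<^sub>v y \<in> carrier_vec n" using S x y by auto
  have "(x + y) \<bullet> (S *\<^sub>v (x + y))
      = x \<bullet> (S *\<^sub>v x) + y \<bullet> (S *\<^sub>v x) + (x \<bullet> (S *\<^sub>v y) + y \<bullet> (S *\<^sub>v y))"
    using x y Sx Sy by (simp add: mult_add_distrib_mat_vec[OF S x y]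
        scalar_prod_add_distrib[of _ n] add_scalar_prod_distrib[of _ n])
  then show ?thesis unfolding symmetric_form[OF S sym x y] by simp
qed

lemma quadratic_form_diff:
  fixes S :: "real mat"
  assumes S: "S \<in> carrier_mat n n" and sym: "transpose_mat S = S"
    and x: "x \<in> carrier_vec n" and y: "y \<in> carrier_vec n"
  shows "(x - y) \<bullet> (S *\<^sub>v (x - y)) = x \<bullet> (S *\<^sub>v x) - 2 * (y \<bullet> (S *\<^sub>v x)) + y \<bullet> (S *\<^sub>v y)"
proof -
  have Sx: "S *\<^sub>v x \<in> carrier_vec n" and Sy: "S *\<^sub>v y \<in> carrier_vec n" using S x y by auto
  have "(x - y) \<bullet> (S *\<^sub>v (x - y))
      = x \<bullet> (S *\<^sub>v x) - y \<bullet> (S *\<^sub>v x) - (x \<bullet> (S *\<^sub>v y) - y \<bullet> (S *\<^sub>v y))"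
    using x y Sx Sy by (simp add: mult_minus_distrib_mat_vec[OF S x y]
        scalar_prod_minus_distrib[of _ n] minus_scalar_prod_distrib[of _ n])
  then show ?thesis unfolding symmetric_form[OF S sym x y] by simp
qed

lemma nonneg_quadratic_no_linear_term:
  fixes c d :: real
  assumes d: "0 \<le> d" and nonneg: "\<And>s. 0 \<le> 2 * s * c + s * s * d"
  shows "c = 0"
proof (rule ccontr)
  assume "c \<noteq> 0"
  define s where "s = - c / (d + 1)"
  have ds: "(d + 1) * s = - c" using d unfolding s_def by simp
  have "(d + 1) * (d + 1) * (2 * s * c + s * s * d)
      = 2 * c * (d + 1) * ((d + 1) * s) + d * ((d + 1) * s) * ((d + 1) * s)"
    by (simp add: algebra_simps)
  also have "\<dots> = - (c * c * (d + 2))" unfolding ds by (simp add: algebra_simps)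
  also have "\<dots> < 0"
  proof -
    have "0 < c\<^sup>2" using \<open>c \<noteq> 0\<close> by simp
    then have "0 < c * c" by (simp add: power2_eq_square)
    then have "0 < c * c * (d + 2)" by (rule mult_pos_pos) (use d in simp)
    then show ?thesis by simp
  qed
  finally have "(d + 1) * (d + 1) * (2 * s * c + s * s * d) < 0" .
  moreover have "0 \<le> (d + 1) * (d + 1) * (2 * s * c + s * s * d)"
    using nonneg[of s] d by (intro mult_nonneg_nonneg) auto
  ultimately show False by linarith
qed

text \<open>A symmetric positive semidefinite matrix is positive definite once it is nonsingular: if
  x'Kx = 0 then the quadratic form is minimal at x, so its gradient Kx vanishes.\<close>

lemma pos_def_if_psd_invertible:
  fixes K :: "real mat"
  assumes K: "K \<in> carrier_mat n n" and sym: "transpose_mat K = K"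
    and psd: "\<And>x. x \<in> carrier_vec n \<Longrightarrow> 0 \<le> x \<bullet> (K *\<^sub>v x)" and det: "det K \<noteq> 0"
  shows "pos_def n K"
  unfolding pos_def_def
proof (intro ballI conjI impI)
  fix x :: "real vec" assume x: "x \<in> carrier_vec n"
  show "0 \<le> x \<bullet> (K *\<^sub>v x)" by (rule psd[OF x])
  assume null: "x \<bullet> (K *\<^sub>v x) = 0"
  define y where "y = K *\<^sub>v x"
  have y: "y \<in> carrier_vec n" unfolding y_def using K x by simp
  have Ky: "K *\<^sub>v y \<in> carrier_vec n" using K y by simp
  have "0 \<le> 2 * s * (y \<bullet> y) + s * s * (y \<bullet> (K *\<^sub>v y))" for s
  proof -
    have sy: "s \<cdot>\<^sub>v y \<in> carrier_vec n" using y by simp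
    have "0 \<le> (x + s \<cdot>\<^sub>v y) \<bullet> (K *\<^sub>v (x + s \<cdot>\<^sub>v y))" using psd x sy by simp
    also have "\<dots> = x \<bullet> (K *\<^sub>v x) + 2 * ((s \<cdot>\<^sub>v y) \<bullet> (K *\<^sub>v x)) + (s \<cdot>\<^sub>v y) \<bullet> (K *\<^sub>v (s \<cdot>\<^sub>v y))"
      by (rule quadratic_form_add[OF K sym x sy])
    also have "\<dots> = 2 * s * (y \<bullet> y) + s * s * (y \<bullet> (K *\<^sub>v y))"
      using null y Ky unfolding y_def[symmetric] mult_mat_vec[OF K y] by simp
    finally show ?thesis .
  qed
  then have "y \<bullet> y = 0" by (rule nonneg_quadratic_no_linear_term[OF psd[OF y]])
  then have "y = 0\<^sub>v n" using pos_defD(2)[OF pos_def_one y] y by simp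
  then have Kx: "K *\<^sub>v x = 0\<^sub>v n" unfolding y_def .
  show "x = 0\<^sub>v n"
  proof (rule ccontr)
    assume "x \<noteq> 0\<^sub>v n"
    then have "\<exists>v. v \<in> carrier_vec n \<and> v \<noteq> 0\<^sub>v n \<and> K *\<^sub>v v = 0\<^sub>v n" using x Kx by blast
    then show False using det_0_iff_vec_prod_zero_field[OF K] det by simp
  qed
qed

section \<open>Congruences and full column rank\<close>

lemma (in vec_space) full_rank_kernel:
  assumes A: "A \<in> carrier_mat n nc" and rank: "rank A = nc"
    and v: "v \<in> carrier_vec nc" and Av: "A *\<^sub>v v = 0\<^sub>v n"
  shows "v = 0\<^sub>v nc"
proof (rule ccontr)
  assume nz: "v \<noteq> 0\<^sub>v nc"
  show False
  proof (cases "distinct (cols A)")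
    case True
    then have "lin_indpt (set (cols A))" using full_rank_lin_indpt A rank by auto
    then show False using lin_depI[OF A v nz Av] True by blast
  next
    case False
    obtain S where S: "maximal S (\<lambda>T. T \<subseteq> set (cols A) \<and> lin_indpt T)"
      using maximal_exists[of "(\<lambda>T. T \<subseteq> set (cols A) \<and> lin_indpt T)" "card (set (cols A))" "{}"]
      by (meson List.finite_set card_mono empty_iff empty_subsetI finite_lin_indpt2 rev_finite_subset)
    then have "card S \<le> card (set (cols A))" by (simp add: card_mono maximal_def)
    then have "card S < nc"
      using A cols_length card_length False card_distinct carrier_matD(2) nat_less_le
      by (metis dual_order.antisym dual_order.trans)
    then show False using rank_card_indpt[OF A S] rank by simp
  qed
qed

lemma congruence_mult_vec:
  fixes Q M :: "real mat"
  assumes Q: "Q \<in> carrier_mat n r" and M: "M \<in> carrier_mat n n" and z: "z \<in> carrier_vec r"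
  shows "(transpose_mat Q * M * Q) *\<^sub>v z = transpose_mat Q *\<^sub>v (M *\<^sub>v (Q *\<^sub>v z))"
proof -
  have Qt: "transpose_mat Q \<in> carrier_mat r n" using Q by simp
  have "(transpose_mat Q * M * Q) *\<^sub>v z = (transpose_mat Q * M) *\<^sub>v (Q *\<^sub>v z)"
    by (rule assoc_mult_mat_vec) (use Qt M Q z in auto)
  also have "\<dots> = transpose_mat Q *\<^sub>v (M *\<^sub>v (Q *\<^sub>v z))"
    by (rule assoc_mult_mat_vec) (use Qt M Q z in auto)
  finally show ?thesis .
qed

lemma congruence_form:
  fixes Q M :: "real mat"
  assumes Q: "Q \<in> carrier_mat n r" and M: "M \<in> carrier_mat n n" and z: "z \<in> carrier_vec r"
  shows "z \<bullet> ((transpose_mat Q * M * Q) *\<^sub>v z) = (Q *\<^sub>v z) \<bullet> (M *\<^sub>v (Q *\<^sub>v z))"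
proof -
  have MQz: "M *\<^sub>v (Q *\<^sub>v z) \<in> carrier_vec n" using M Q z by simp
  have "z \<bullet> ((transpose_mat Q * M * Q) *\<^sub>v z) = (transpose_mat Q *\<^sub>v (M *\<^sub>v (Q *\<^sub>v z))) \<bullet> z"
    unfolding congruence_mult_vec[OF Q M z] by (rule comm_scalar_prod[of _ r]) (use Q MQz z in auto)
  also have "\<dots> = (M *\<^sub>v (Q *\<^sub>v z)) \<bullet> (Q *\<^sub>v z)" by (rule transpose_vec_mult_scalar[OF Q z MQz])
  also have "\<dots> = (Q *\<^sub>v z) \<bullet> (M *\<^sub>v (Q *\<^sub>v z))" by (rule comm_scalar_prod[of _ n]) (use Q MQz z in auto)
  finally show ?thesis .
qed

lemma congruence_kernel:
  fixes Q M :: "real mat"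
  assumes Q: "Q \<in> carrier_mat n r" and rank: "vec_space.rank n Q = r"
    and M: "M \<in> carrier_mat n n" and pd: "pos_def n M"
    and z: "z \<in> carrier_vec r" and null: "transpose_mat Q *\<^sub>v (M *\<^sub>v (Q *\<^sub>v z)) = 0\<^sub>v r"
  shows "z = 0\<^sub>v r"
proof -
  have "(Q *\<^sub>v z) \<bullet> (M *\<^sub>v (Q *\<^sub>v z)) = 0"
    using congruence_form[OF Q M z] congruence_mult_vec[OF Q M z] null z by simp
  then have "Q *\<^sub>v z = 0\<^sub>v n" using pos_defD(2)[OF pd] Q z by simp
  then show ?thesis by (rule vec_space.full_rank_kernel[OF Q rank z])
qed

lemma congruence_det_nonzero:
  fixes Q M :: "real mat"
  assumes Q: "Q \<in> carrier_mat n r" and rank: "vec_space.rank n Q = r"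
    and M: "M \<in> carrier_mat n n" and pd: "pos_def n M"
  shows "det (transpose_mat Q * M * Q) \<noteq> 0"
proof (rule det_nonzero_if_injective)
  show "transpose_mat Q * M * Q \<in> carrier_mat r r" using Q M by simp
  fix z assume "z \<in> carrier_vec r" "(transpose_mat Q * M * Q) *\<^sub>v z = 0\<^sub>v r"
  then show "z = 0\<^sub>v r" using congruence_kernel[OF Q rank M pd] congruence_mult_vec[OF Q M] by simp
qed

lemma congruence_entry:
  fixes A Q :: "real mat"
  assumes A: "A \<in> carrier_mat n n" and Q: "Q \<in> carrier_mat n r" and k: "k < r" and l: "l < r"
  shows "(transpose_mat Q * A * Q) $$ (k,l) = col Q k \<bullet> (A *\<^sub>v col Q l)"
proof -
  have "transpose_mat Q * A * Q = transpose_mat Q * (A * Q)"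
    using A Q by (simp add: assoc_mult_mat[of _ r n])
  then show ?thesis using A Q k l by (simp add: col_mult2[OF A Q l])
qed

lemma congruence_entry_add_smult:
  fixes A B Q :: "real mat"
  assumes A: "A \<in> carrier_mat n n" and B: "B \<in> carrier_mat n n" and Q: "Q \<in> carrier_mat n r"
    and k: "k < r" and l: "l < r"
  shows "(transpose_mat Q * (A + c \<cdot>\<^sub>m B) * Q) $$ (k,l)
    = (transpose_mat Q * A * Q) $$ (k,l) + c * (transpose_mat Q * B * Q) $$ (k,l)"
proof -
  have q: "col Q k \<in> carrier_vec n" "col Q l \<in> carrier_vec n" using Q k l by auto
  have AB: "A + c \<cdot>\<^sub>m B \<in> carrier_mat n n" using A B by simp
  have "(A + c \<cdot>\<^sub>m B) *\<^sub>v col Q l = A *\<^sub>v col Q l + c \<cdot>\<^sub>v (B *\<^sub>v col Q l)"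
    using add_mult_distrib_mat_vec[of A n n "c \<cdot>\<^sub>m B"] smult_mat_mult_vec[OF B q(2)] A B q by simp
  then show ?thesis
    using A B q unfolding congruence_entry[OF AB Q k l]
      congruence_entry[OF A Q k l] congruence_entry[OF B Q k l]
    by (simp add: scalar_prod_add_distrib[of _ n])
qed

text \<open>For diagonal E, the entry (k,l) of Q'EQ only involves rows where columns k and l of Q
  are both nonzero, which do not exist when the bands of the two columns are disjoint.\<close>

lemma banded_diagonal_congruence:
  fixes E Q :: "real mat"
  assumes E: "E \<in> carrier_mat n n" and diag: "diagonal_mat E" and Q: "Q \<in> carrier_mat n r"
    and Q_band: "\<forall>i<n. \<forall>j<r. Q $$ (i,j) \<noteq> 0 \<longrightarrow> j \<le> i \<and> i \<le> j + m"
    and k: "k < r" and l: "l < r" and far: "k > l + m \<or> l > k + m"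
  shows "(transpose_mat Q * E * Q) $$ (k,l) = 0"
proof -
  have "col Q k \<bullet> (E *\<^sub>v col Q l) = (\<Sum>i\<in>{0..<n}. Q $$ (i,k) * (E $$ (i,i) * Q $$ (i,l)))"
    unfolding diagonal_mult_vec[OF E diag col_dim[of Q l, unfolded carrier_matD(1)[OF Q]]]
      scalar_prod_def using Q k l by simp
  also have "\<dots> = 0"
  proof (rule sum.neutral, rule ballI)
    fix i assume i: "i \<in> {0..<n}"
    show "Q $$ (i,k) * (E $$ (i,i) * Q $$ (i,l)) = 0"
    proof (rule ccontr)
      assume "Q $$ (i,k) * (E $$ (i,i) * Q $$ (i,l)) \<noteq> 0"
      then have "Q $$ (i,k) \<noteq> 0" "Q $$ (i,l) \<noteq> 0" by auto
      then have "k \<le> i \<and> i \<le> k + m" "l \<le> i \<and> i \<le> l + m" using Q_band i k l by auto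
      then show False using far by linarith
    qed
  qed
  finally show ?thesis unfolding congruence_entry[OF E Q k l] .
qed

section \<open>Complementary column spaces\<close>

lemma complement_coefficient_zero:
  fixes T Q :: "real mat"
  assumes T: "T \<in> carrier_mat n m" and Q: "Q \<in> carrier_mat n r"
    and rankQ: "vec_space.rank n Q = r" and QT: "transpose_mat Q * T = 0\<^sub>m r m"
    and a: "a \<in> carrier_vec m" and d: "d \<in> carrier_vec r"
    and null: "transpose_mat Q *\<^sub>v (T *\<^sub>v a + Q *\<^sub>v d) = 0\<^sub>v r"
  shows "d = 0\<^sub>v r"
proof (rule congruence_kernel[OF Q rankQ one_carrier_mat pos_def_one d])
  have Qt: "transpose_mat Q \<in> carrier_mat r n" using Q by simp
  have "transpose_mat Q *\<^sub>v (T *\<^sub>v a) = (transpose_mat Q * T) *\<^sub>v a"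
    using assoc_mult_mat_vec[OF Qt T a] by simp
  also have "\<dots> = 0\<^sub>v r" unfolding QT using a by (intro eq_vecI) auto
  finally have "transpose_mat Q *\<^sub>v (T *\<^sub>v a) = 0\<^sub>v r" .
  then show "transpose_mat Q *\<^sub>v (1\<^sub>m n *\<^sub>v (Q *\<^sub>v d)) = 0\<^sub>v r"
    using null mult_add_distrib_mat_vec[OF Qt, of "T *\<^sub>v a" "Q *\<^sub>v d"] T Q a d by simp
qed

text \<open>Under the rank conditions the block matrix [T | Q] is nonsingular, so its columns span the
  whole space.\<close>

lemma range_sum_complement:
  fixes T Q :: "real mat"
  assumes T: "T \<in> carrier_mat n m" and Q: "Q \<in> carrier_mat n r" and dim: "m + r = n"
    and rankT: "vec_space.rank n T = m" and rankQ: "vec_space.rank n Q = r"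
    and QT: "transpose_mat Q * T = 0\<^sub>m r m" and z: "z \<in> carrier_vec n"
  shows "\<exists>a \<in> carrier_vec m. \<exists>d \<in> carrier_vec r. z = T *\<^sub>v a + Q *\<^sub>v d"
proof -
  define S where "S = four_block_mat T Q (0\<^sub>m 0 m) (0\<^sub>m 0 r)"
  have S: "S \<in> carrier_mat n n"
    using four_block_carrier_mat[OF T zero_carrier_mat[of 0 r]] dim unfolding S_def by simp
  have block: "S *\<^sub>v (a @\<^sub>v d) = T *\<^sub>v a + Q *\<^sub>v d"
    if a: "a \<in> carrier_vec m" and d: "d \<in> carrier_vec r" for a d
  proof -
    have "S *\<^sub>v (a @\<^sub>v d) = (T *\<^sub>v a + Q *\<^sub>v d) @\<^sub>v (0\<^sub>m 0 m *\<^sub>v a + 0\<^sub>m 0 r *\<^sub>v d)"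
      unfolding S_def by (rule four_block_mat_mult_vec[OF T Q _ _ a d]) auto
    also have "\<dots> = T *\<^sub>v a + Q *\<^sub>v d" by (rule eq_vecI) (use T Q a d in auto)
    finally show ?thesis .
  qed
  have split: "v = vec_first v m @\<^sub>v vec_last v r" if "v \<in> carrier_vec n" for v
    using vec_first_last_append[of v m r] that dim by simp
  have "det S \<noteq> 0"
  proof (rule det_nonzero_if_injective[OF S])
    fix v assume v: "v \<in> carrier_vec n" and Sv: "S *\<^sub>v v = 0\<^sub>v n"
    let ?a = "vec_first v m" and ?d = "vec_last v r"
    have null: "T *\<^sub>v ?a + Q *\<^sub>v ?d = 0\<^sub>v n" using block[of ?a ?d] split[OF v] Sv by simp
    then have "transpose_mat Q *\<^sub>v (T *\<^sub>v ?a + Q *\<^sub>v ?d) = 0\<^sub>v r"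
      using mult_mat_vec_zero[of "transpose_mat Q" r n] Q by simp
    then have d0: "?d = 0\<^sub>v r" by (rule complement_coefficient_zero[OF T Q rankQ QT vec_first_carrier vec_last_carrier])
    then have "T *\<^sub>v ?a = 0\<^sub>v n" using null T Q by (simp add: mult_mat_vec_zero)
    then have a0: "?a = 0\<^sub>v m" by (rule vec_space.full_rank_kernel[OF T rankT vec_first_carrier])
    show "v = 0\<^sub>v n" using split[OF v] a0 d0 dim by (auto intro!: eq_vecI)
  qed
  note S_inv = minv_props[OF S this]
  define v where "v = minv S *\<^sub>v z"
  have v: "v \<in> carrier_vec n" unfolding v_def using S_inv(1) z by simp
  have "S *\<^sub>v v = z" unfolding v_def
    using assoc_mult_mat_vec[OF S S_inv(1) z, symmetric] S_inv(2) z by simp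
  then have "z = S *\<^sub>v (vec_first v m @\<^sub>v vec_last v r)" using split[OF v] by metis
  also have "\<dots> = T *\<^sub>v vec_first v m + Q *\<^sub>v vec_last v r" by (rule block) simp_all
  finally show ?thesis using vec_first_carrier vec_last_carrier by blast
qed

lemma orthogonal_complement_range:
  fixes T Q :: "real mat"
  assumes T: "T \<in> carrier_mat n m" and Q: "Q \<in> carrier_mat n r" and dim: "m + r = n"
    and rankT: "vec_space.rank n T = m" and rankQ: "vec_space.rank n Q = r"
    and QT: "transpose_mat Q * T = 0\<^sub>m r m"
    and z: "z \<in> carrier_vec n" and Qz: "transpose_mat Q *\<^sub>v z = 0\<^sub>v r"
  shows "\<exists>c \<in> carrier_vec m. z = T *\<^sub>v c"
proof -
  obtain a d where a: "a \<in> carrier_vec m" and d: "d \<in> carrier_vec r" and za: "z = T *\<^sub>v a + Q *\<^sub>v d"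
    using range_sum_complement[OF T Q dim rankT rankQ QT z] by blast
  have "d = 0\<^sub>v r" using complement_coefficient_zero[OF T Q rankQ QT a d] Qz za by simp
  then have "z = T *\<^sub>v a" using za T Q a by (simp add: mult_mat_vec_zero)
  then show ?thesis using a by blast
qed

section \<open>Penalized least squares\<close>

lemma ridge_solution:
  fixes T Q M :: "real mat" and Y :: "real vec"
  assumes T: "T \<in> carrier_mat n m" and Q: "Q \<in> carrier_mat n r" and dim: "m + r = n"
    and rankT: "vec_space.rank n T = m" and rankQ: "vec_space.rank n Q = r"
    and QT: "transpose_mat Q * T = 0\<^sub>m r m"
    and M: "M \<in> carrier_mat n n" and pdM: "pos_def n M" and Y: "Y \<in> carrier_vec n"
    and \<beta>_def: "\<beta> = Q * minv (transpose_mat Q * M * Q) * transpose_mat Q *\<^sub>v Y"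
    and \<alpha>_def: "\<alpha> = minv (transpose_mat T * T) * transpose_mat T *\<^sub>v (Y - M *\<^sub>v \<beta>)"
  shows "\<alpha> \<in> carrier_vec m" "\<beta> \<in> carrier_vec n"
    "transpose_mat T *\<^sub>v \<beta> = 0\<^sub>v m" "T *\<^sub>v \<alpha> = Y - M *\<^sub>v \<beta>"
proof -
  define A where "A = transpose_mat Q * M * Q"
  define G where "G = transpose_mat T * T"
  have Qt: "transpose_mat Q \<in> carrier_mat r n" and Tt: "transpose_mat T \<in> carrier_mat m n"
    using Q T by auto
  have A: "A \<in> carrier_mat r r" and G: "G \<in> carrier_mat m m" unfolding A_def G_def using Q M T by auto
  note A_inv = minv_props[OF A congruence_det_nonzero[OF Q rankQ M pdM, folded A_def]]
  have "det (transpose_mat T * 1\<^sub>m n * T) \<noteq> 0"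
    by (rule congruence_det_nonzero[OF T rankT one_carrier_mat pos_def_one])
  then have "det G \<noteq> 0" unfolding G_def using right_mult_one_mat[OF Tt] by simp
  note G_inv = minv_props[OF G this]
  define w where "w = minv A *\<^sub>v (transpose_mat Q *\<^sub>v Y)"
  have w: "w \<in> carrier_vec r" unfolding w_def using A_inv(1) Qt Y by simp
  have \<beta>_def': "\<beta> = Q *\<^sub>v w"
    unfolding \<beta>_def A_def[symmetric] w_def
    using assoc_mult_mat_vec[OF mult_carrier_mat[OF Q A_inv(1)] Qt Y]
      assoc_mult_mat_vec[OF Q A_inv(1)] Qt Y by simp
  show \<beta>: "\<beta> \<in> carrier_vec n" unfolding \<beta>_def' using Q w by simp
  define z where "z = Y - M *\<^sub>v \<beta>"
  have z: "z \<in> carrier_vec n" unfolding z_def using Y M \<beta> by simp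
  have "transpose_mat T *\<^sub>v \<beta> = (transpose_mat T * Q) *\<^sub>v w"
    unfolding \<beta>_def' by (rule assoc_mult_mat_vec[symmetric, OF Tt Q w])
  also have "transpose_mat T * Q = transpose_mat (transpose_mat Q * T)"
    using transpose_mult[OF Qt T] by simp
  also have "\<dots> *\<^sub>v w = 0\<^sub>v m" unfolding QT using w by (intro eq_vecI) auto
  finally show "transpose_mat T *\<^sub>v \<beta> = 0\<^sub>v m" .
  have "transpose_mat Q *\<^sub>v (M *\<^sub>v \<beta>) = A *\<^sub>v w"
    unfolding \<beta>_def' A_def by (rule congruence_mult_vec[OF Q M w, symmetric])
  also have "\<dots> = transpose_mat Q *\<^sub>v Y"
    unfolding w_def using assoc_mult_mat_vec[OF A A_inv(1), of "transpose_mat Q *\<^sub>v Y"] A_inv(2) Qt Y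
    by simp
  finally have "transpose_mat Q *\<^sub>v z = 0\<^sub>v r"
    unfolding z_def using mult_minus_distrib_mat_vec[OF Qt Y, of "M *\<^sub>v \<beta>"] M \<beta> Qt Y by simp
  then obtain c where c: "c \<in> carrier_vec m" and zc: "z = T *\<^sub>v c"
    using orthogonal_complement_range[OF T Q dim rankT rankQ QT z] by blast
  have "\<alpha> = minv G *\<^sub>v (G *\<^sub>v c)"
    unfolding \<alpha>_def z_def[symmetric] G_def zc
    using assoc_mult_mat_vec[OF G_inv(1)[unfolded G_def] Tt, of "T *\<^sub>v c"]
      assoc_mult_mat_vec[OF Tt T c] T c by simp
  also have "\<dots> = c"
    using assoc_mult_mat_vec[OF G_inv(1) G c, symmetric] G_inv(3) c by simp
  finally have "\<alpha> = c" .
  then show "\<alpha> \<in> carrier_vec m" and "T *\<^sub>v \<alpha> = Y - M *\<^sub>v \<beta>" using c zc z_def by simp_all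
qed

lemma fitted_values:
  fixes T K E D :: "real mat" and Y \<alpha> \<beta> :: "real vec"
  assumes T: "T \<in> carrier_mat n m" and K: "K \<in> carrier_mat n n" and E: "E \<in> carrier_mat n n"
    and D: "D \<in> carrier_mat n n" and DE: "D * E = 1\<^sub>m n"
    and Y: "Y \<in> carrier_vec n" and \<alpha>: "\<alpha> \<in> carrier_vec m" and \<beta>: "\<beta> \<in> carrier_vec n"
    and fit: "T *\<^sub>v \<alpha> = Y - (K + lam \<cdot>\<^sub>m E) *\<^sub>v \<beta>"
  shows "T *\<^sub>v \<alpha> + K *\<^sub>v \<beta> = Y - lam \<cdot>\<^sub>v (E *\<^sub>v \<beta>)"
    and "D *\<^sub>v (Y - T *\<^sub>v \<alpha> - K *\<^sub>v \<beta>) = lam \<cdot>\<^sub>v \<beta>"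
proof -
  have M\<beta>: "(K + lam \<cdot>\<^sub>m E) *\<^sub>v \<beta> = K *\<^sub>v \<beta> + lam \<cdot>\<^sub>v (E *\<^sub>v \<beta>)"
    using add_mult_distrib_mat_vec[of K n n "lam \<cdot>\<^sub>m E" \<beta>] smult_mat_mult_vec[OF E \<beta>] K E \<beta> by simp
  note dims = carrier_vecD[OF Y] carrier_matD[OF T] carrier_matD[OF K] carrier_matD[OF E]
  show "T *\<^sub>v \<alpha> + K *\<^sub>v \<beta> = Y - lam \<cdot>\<^sub>v (E *\<^sub>v \<beta>)"
    unfolding fit M\<beta> by (rule eq_vecI) (simp_all add: dims)
  have "Y - T *\<^sub>v \<alpha> - K *\<^sub>v \<beta> = lam \<cdot>\<^sub>v (E *\<^sub>v \<beta>)"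
    unfolding fit M\<beta> by (rule eq_vecI) (simp_all add: dims)
  also have "D *\<^sub>v \<dots> = lam \<cdot>\<^sub>v ((D * E) *\<^sub>v \<beta>)"
    using mult_mat_vec[OF D, of "E *\<^sub>v \<beta>" lam] assoc_mult_mat_vec[OF D E \<beta>] E \<beta> by simp
  finally show "D *\<^sub>v (Y - T *\<^sub>v \<alpha> - K *\<^sub>v \<beta>) = lam \<cdot>\<^sub>v \<beta>" unfolding DE using \<beta> by simp
qed

lemma ridge_obj_expansion:
  fixes T K D :: "real mat" and Y \<alpha>\<^sub>0 \<beta>\<^sub>0 \<alpha> \<beta> :: "real vec"
  assumes T: "T \<in> carrier_mat n m" and K: "K \<in> carrier_mat n n" and K_sym: "transpose_mat K = K"
    and D: "D \<in> carrier_mat n n" and D_sym: "transpose_mat D = D" and Y: "Y \<in> carrier_vec n"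
    and \<alpha>\<^sub>0: "\<alpha>\<^sub>0 \<in> carrier_vec m" and \<beta>\<^sub>0: "\<beta>\<^sub>0 \<in> carrier_vec n"
    and orth: "transpose_mat T *\<^sub>v \<beta>\<^sub>0 = 0\<^sub>v m"
    and stationary: "D *\<^sub>v (Y - T *\<^sub>v \<alpha>\<^sub>0 - K *\<^sub>v \<beta>\<^sub>0) = lam \<cdot>\<^sub>v \<beta>\<^sub>0"
    and \<alpha>: "\<alpha> \<in> carrier_vec m" and \<beta>: "\<beta> \<in> carrier_vec n"
  shows "ridge_obj Y T K D lam \<alpha> \<beta> = ridge_obj Y T K D lam \<alpha>\<^sub>0 \<beta>\<^sub>0
    + (T *\<^sub>v (\<alpha> - \<alpha>\<^sub>0) + K *\<^sub>v (\<beta> - \<beta>\<^sub>0)) \<bullet> (D *\<^sub>v (T *\<^sub>v (\<alpha> - \<alpha>\<^sub>0) + K *\<^sub>v (\<beta> - \<beta>\<^sub>0)))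
    + lam * ((\<beta> - \<beta>\<^sub>0) \<bullet> (K *\<^sub>v (\<beta> - \<beta>\<^sub>0)))"
proof -
  define a where "a = \<alpha> - \<alpha>\<^sub>0"
  define b where "b = \<beta> - \<beta>\<^sub>0"
  define r where "r = Y - T *\<^sub>v \<alpha>\<^sub>0 - K *\<^sub>v \<beta>\<^sub>0"
  define s where "s = T *\<^sub>v a + K *\<^sub>v b"
  have a: "a \<in> carrier_vec m" and b: "b \<in> carrier_vec n" unfolding a_def b_def using \<alpha> \<alpha>\<^sub>0 \<beta> \<beta>\<^sub>0 by auto
  have Ta: "T *\<^sub>v a \<in> carrier_vec n" and Kb: "K *\<^sub>v b \<in> carrier_vec n" using T K a b by auto
  have r: "r \<in> carrier_vec n" and s: "s \<in> carrier_vec n" unfolding r_def s_def using T K Y \<alpha>\<^sub>0 \<beta>\<^sub>0 a b by auto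
  note dims = carrier_vecD[OF Y] carrier_vecD[OF \<alpha>] carrier_vecD[OF \<alpha>\<^sub>0] carrier_vecD[OF \<beta>]
    carrier_vecD[OF \<beta>\<^sub>0] carrier_matD[OF T] carrier_matD[OF K]
  have residual: "Y - T *\<^sub>v \<alpha> - K *\<^sub>v \<beta> = r - s"
    unfolding r_def s_def a_def b_def mult_minus_distrib_mat_vec[OF T \<alpha> \<alpha>\<^sub>0]
      mult_minus_distrib_mat_vec[OF K \<beta> \<beta>\<^sub>0]
    by (rule eq_vecI) (simp_all add: dims)
  have \<beta>_split: "\<beta> = \<beta>\<^sub>0 + b" unfolding b_def by (rule eq_vecI) (simp_all add: dims)
  have cross: "s \<bullet> (D *\<^sub>v r) = lam * (b \<bullet> (K *\<^sub>v \<beta>\<^sub>0))"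
  proof -
    have "(T *\<^sub>v a) \<bullet> \<beta>\<^sub>0 = (transpose_mat T *\<^sub>v \<beta>\<^sub>0) \<bullet> a"
      using transpose_vec_mult_scalar[OF T a \<beta>\<^sub>0] comm_scalar_prod[OF Ta \<beta>\<^sub>0] by simp
    then have Ta_orth: "(T *\<^sub>v a) \<bullet> \<beta>\<^sub>0 = 0" unfolding orth using a by simp
    have "(K *\<^sub>v b) \<bullet> \<beta>\<^sub>0 = b \<bullet> (K *\<^sub>v \<beta>\<^sub>0)"
      using comm_scalar_prod[OF Kb \<beta>\<^sub>0] symmetric_form[OF K K_sym \<beta>\<^sub>0 b] by simp
    then have "s \<bullet> \<beta>\<^sub>0 = b \<bullet> (K *\<^sub>v \<beta>\<^sub>0)"
      unfolding s_def add_scalar_prod_distrib[OF Ta Kb \<beta>\<^sub>0] Ta_orth by simp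
    then show ?thesis unfolding r_def stationary using s \<beta>\<^sub>0 by simp
  qed
  have "ridge_obj Y T K D lam \<alpha> \<beta> = (r - s) \<bullet> (D *\<^sub>v (r - s)) + lam * (\<beta> \<bullet> (K *\<^sub>v \<beta>))"
    unfolding ridge_obj_def residual ..
  also have "\<dots> = r \<bullet> (D *\<^sub>v r) + lam * (\<beta>\<^sub>0 \<bullet> (K *\<^sub>v \<beta>\<^sub>0)) + s \<bullet> (D *\<^sub>v s) + lam * (b \<bullet> (K *\<^sub>v b))"
    unfolding quadratic_form_diff[OF D D_sym r s] \<beta>_split quadratic_form_add[OF K K_sym \<beta>\<^sub>0 b] cross
    by (simp add: algebra_simps)
  also have "r \<bullet> (D *\<^sub>v r) + lam * (\<beta>\<^sub>0 \<bullet> (K *\<^sub>v \<beta>\<^sub>0)) = ridge_obj Y T K D lam \<alpha>\<^sub>0 \<beta>\<^sub>0"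
    unfolding ridge_obj_def r_def ..
  finally show ?thesis unfolding s_def a_def b_def .
qed

lemma ridge_unique_minimizer:
  fixes T K D :: "real mat" and Y \<alpha>\<^sub>0 \<beta>\<^sub>0 :: "real vec"
  assumes T: "T \<in> carrier_mat n m" and rankT: "vec_space.rank n T = m"
    and K: "K \<in> carrier_mat n n" and K_sym: "transpose_mat K = K" and pdK: "pos_def n K"
    and D: "D \<in> carrier_mat n n" and D_sym: "transpose_mat D = D" and pdD: "pos_def n D"
    and lam: "lam > 0" and Y: "Y \<in> carrier_vec n"
    and \<alpha>\<^sub>0: "\<alpha>\<^sub>0 \<in> carrier_vec m" and \<beta>\<^sub>0: "\<beta>\<^sub>0 \<in> carrier_vec n"
    and orth: "transpose_mat T *\<^sub>v \<beta>\<^sub>0 = 0\<^sub>v m"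
    and stationary: "D *\<^sub>v (Y - T *\<^sub>v \<alpha>\<^sub>0 - K *\<^sub>v \<beta>\<^sub>0) = lam \<cdot>\<^sub>v \<beta>\<^sub>0"
  shows "is_ridge_minimizer n m Y T K D lam p \<longleftrightarrow> p = (\<alpha>\<^sub>0, \<beta>\<^sub>0)"
proof -
  let ?f = "ridge_obj Y T K D lam"
  let ?s = "\<lambda>\<alpha> \<beta>. T *\<^sub>v (\<alpha> - \<alpha>\<^sub>0) + K *\<^sub>v (\<beta> - \<beta>\<^sub>0)"
  have s: "?s \<alpha> \<beta> \<in> carrier_vec n" and b: "\<beta> - \<beta>\<^sub>0 \<in> carrier_vec n"
    if "\<alpha> \<in> carrier_vec m" "\<beta> \<in> carrier_vec n" for \<alpha> \<beta>
    using that T K \<alpha>\<^sub>0 \<beta>\<^sub>0 by auto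
  note expansion = ridge_obj_expansion[OF T K K_sym D D_sym Y \<alpha>\<^sub>0 \<beta>\<^sub>0 orth stationary]
  have optimal: "?f \<alpha>\<^sub>0 \<beta>\<^sub>0 \<le> ?f \<alpha> \<beta>" if \<alpha>: "\<alpha> \<in> carrier_vec m" and \<beta>: "\<beta> \<in> carrier_vec n" for \<alpha> \<beta>
    unfolding expansion[OF \<alpha> \<beta>]
    using pos_defD(1)[OF pdD s[OF \<alpha> \<beta>]] pos_defD(1)[OF pdK b[OF \<alpha> \<beta>]] lam by simp
  have unique: "\<alpha> = \<alpha>\<^sub>0 \<and> \<beta> = \<beta>\<^sub>0"
    if \<alpha>: "\<alpha> \<in> carrier_vec m" and \<beta>: "\<beta> \<in> carrier_vec n" and le: "?f \<alpha> \<beta> \<le> ?f \<alpha>\<^sub>0 \<beta>\<^sub>0" for \<alpha> \<beta>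
  proof -
    note nonneg = pos_defD(1)[OF pdD s[OF \<alpha> \<beta>]] pos_defD(1)[OF pdK b[OF \<alpha> \<beta>]]
    have "0 \<le> lam * ((\<beta> - \<beta>\<^sub>0) \<bullet> (K *\<^sub>v (\<beta> - \<beta>\<^sub>0)))" using nonneg lam by simp
    then have zero: "?s \<alpha> \<beta> \<bullet> (D *\<^sub>v ?s \<alpha> \<beta>) = 0" "lam * ((\<beta> - \<beta>\<^sub>0) \<bullet> (K *\<^sub>v (\<beta> - \<beta>\<^sub>0))) = 0"
      using le nonneg unfolding expansion[OF \<alpha> \<beta>] by linarith+
    then have "\<beta> - \<beta>\<^sub>0 = 0\<^sub>v n" using pos_defD(2)[OF pdK b[OF \<alpha> \<beta>]] lam by simp
    then have \<beta>_eq: "\<beta> = \<beta>\<^sub>0" by (rule vec_diff_zero_eq[OF \<beta> \<beta>\<^sub>0])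
    have "?s \<alpha> \<beta> = 0\<^sub>v n" using pos_defD(2)[OF pdD s[OF \<alpha> \<beta>] zero(1)] .
    then have "T *\<^sub>v (\<alpha> - \<alpha>\<^sub>0) = 0\<^sub>v n"
      unfolding \<beta>_eq using T K \<alpha> \<alpha>\<^sub>0 \<beta>\<^sub>0 by (simp add: mult_mat_vec_zero)
    then have "\<alpha> - \<alpha>\<^sub>0 = 0\<^sub>v m" by (rule vec_space.full_rank_kernel[OF T rankT, rotated]) (use \<alpha> \<alpha>\<^sub>0 in simp)
    then show ?thesis using vec_diff_zero_eq[OF \<alpha> \<alpha>\<^sub>0] \<beta>_eq by simp
  qed
  show ?thesis
  proof
    assume "is_ridge_minimizer n m Y T K D lam p"
    then show "p = (\<alpha>\<^sub>0, \<beta>\<^sub>0)"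
      using unique[of "fst p" "snd p"] \<alpha>\<^sub>0 \<beta>\<^sub>0 unfolding is_ridge_minimizer_def by (cases p) auto
  next
    assume "p = (\<alpha>\<^sub>0, \<beta>\<^sub>0)"
    then show "is_ridge_minimizer n m Y T K D lam p"
      using optimal \<alpha>\<^sub>0 \<beta>\<^sub>0 unfolding is_ridge_minimizer_def by simp
  qed
qed

section \<open>The Green's function kernel\<close>

lemma basis_derivative_continuous:
  assumes basis: "is_ker_basis a b m w u Du" and i: "i < m" and j: "j < m"
  shows "continuous_on {a..b} (Du i j)"
proof -
  have "L_annihilates a b m w (Du i)" using basis i unfolding is_ker_basis_def by blast
  then have "\<forall>x\<in>{a..b}. (Du i j has_real_derivative Du i (Suc j) x) (at x within {a..b})"
    using j unfolding L_annihilates_def has_derivs_on_def by blast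
  then show ?thesis
    unfolding continuous_on_eq_continuous_within using DERIV_continuous by blast
qed

lemma continuous_on_det:
  fixes F :: "real \<Rightarrow> real mat"
  assumes F: "\<And>x. x \<in> S \<Longrightarrow> F x \<in> carrier_mat k k"
    and entries: "\<And>i j. i < k \<Longrightarrow> j < k \<Longrightarrow> continuous_on S (\<lambda>x. F x $$ (i,j))"
  shows "continuous_on S (\<lambda>x. det (F x))"
proof -
  have "continuous_on S
      (\<lambda>x. \<Sum>p \<in> {p. p permutes {0..<k}}. signof p * (\<Prod>i = 0..<k. F x $$ (i, p i)))"
  proof (intro continuous_on_sum continuous_on_mult continuous_on_const continuous_on_prod)
    fix p i assume p: "p \<in> {p. p permutes {0..<k}}" and i: "i \<in> {0..<k}"
    then have "p i < k" using permutes_in_image[of p "{0..<k}" i] by auto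
    then show "continuous_on S (\<lambda>x. F x $$ (i, p i))" using entries i by auto
  qed
  then show ?thesis by (rule continuous_on_eq) (simp add: det_def'[OF F])
qed

lemma wronskian_carrier: "wronskian m Du x \<in> carrier_mat m m"
  unfolding wronskian_def by simp

lemma ustar_cofactor:
  assumes d: "det (wronskian m Du x) \<noteq> 0" and m1: "1 \<le> m" and p: "p < m"
  shows "ustar m Du p x = cofactor (wronskian m Du x) p (m - 1) / det (wronskian m Du x)"
proof -
  have "ustar m Du p x
      = ((1 / det (wronskian m Du x)) \<cdot>\<^sub>m adj_mat (wronskian m Du x)) $$ (m - 1, p)"
    unfolding ustar_def minv_adj[OF wronskian_carrier d] by simp
  also have "\<dots> = cofactor (wronskian m Du x) p (m - 1) / det (wronskian m Du x)"
    using m1 p by (simp add: adj_mat_def wronskian_def)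
  finally show ?thesis .
qed

text \<open>The functions u*_p are continuous on [a,b], being quotients of minors of the Wronskian by
  its nonvanishing determinant.\<close>

lemma ustar_continuous:
  assumes basis: "is_ker_basis a b m w u Du" and m1: "1 \<le> m"
    and W_inv: "\<forall>x\<in>{a..b}. invertible_mat (wronskian m Du x)" and p: "p < m"
  shows "continuous_on {a..b} (ustar m Du p)"
proof -
  have det_nz: "\<And>x. x \<in> {a..b} \<Longrightarrow> det (wronskian m Du x) \<noteq> 0"
    using W_inv invertible_det_nonzero[OF wronskian_carrier] by blast
  have cont_det: "continuous_on {a..b} (\<lambda>x. det (wronskian m Du x))"
    by (rule continuous_on_det[where k = m], rule wronskian_carrier)
      (simp add: wronskian_def basis_derivative_continuous[OF basis])
  have cont_minor: "continuous_on {a..b} (\<lambda>x. det (mat_delete (wronskian m Du x) p (m - 1)))"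
  proof (rule continuous_on_det[where k = "m - 1"])
    fix x show "mat_delete (wronskian m Du x) p (m - 1) \<in> carrier_mat (m - 1) (m - 1)"
      using mat_delete_carrier[OF wronskian_carrier] .
  next
    fix i j assume i: "i < m - 1" and j: "j < m - 1"
    define i' where "i' = (if i < p then i else Suc i)"
    define j' where "j' = (if j < m - 1 then j else Suc j)"
    have i'm: "i' < m" and j'm: "j' < m" using i j p unfolding i'_def j'_def by auto
    have "\<And>x. mat_delete (wronskian m Du x) p (m - 1) $$ (i,j) = Du i' j' x"
      using i j i'm j'm unfolding mat_delete_def wronskian_def i'_def j'_def by simp
    then show "continuous_on {a..b} (\<lambda>x. mat_delete (wronskian m Du x) p (m - 1) $$ (i,j))"
      using basis_derivative_continuous[OF basis i'm j'm] by simp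
  qed
  have "continuous_on {a..b}
      (\<lambda>x. ((-1)^(p + (m - 1)) * det (mat_delete (wronskian m Du x) p (m - 1))) / det (wronskian m Du x))"
    by (intro continuous_on_divide continuous_on_mult continuous_on_const cont_minor cont_det)
      (use det_nz in auto)
  then show ?thesis
    by (rule continuous_on_eq) (use det_nz m1 p in \<open>auto simp: ustar_cofactor cofactor_def\<close>)
qed

lemma truncated_integrable:
  fixes f :: "real \<Rightarrow> real"
  assumes f: "continuous_on {a..b} f"
  shows "(\<lambda>v. if v \<le> c then f v else 0) integrable_on {a..b}"
proof -
  have "f integrable_on {a..min b c}"
    by (rule integrable_continuous_interval, rule continuous_on_subset[OF f]) auto
  moreover have "{..c} \<inter> {a..b} = {a..min b c}" by auto
  ultimately have "(\<lambda>v. if v \<in> {..c} then f v else 0) integrable_on {a..b}"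
    using integrable_restrict_Int by metis
  then show ?thesis by simp
qed

text \<open>Products of Green's functions are integrable, so the entries of K are genuine integrals.\<close>

lemma green_product_integrable:
  assumes basis: "is_ker_basis a b m w u Du" and m1: "1 \<le> m"
    and W_inv: "\<forall>x\<in>{a..b}. invertible_mat (wronskian m Du x)"
  shows "(\<lambda>v. green m u Du x v * green m u Du y v) integrable_on {a..b}"
proof -
  have cont: "continuous_on {a..b} (\<lambda>v. \<Sum>i<m. u i z * ustar m Du i v)" for z
    by (intro continuous_on_sum continuous_on_mult continuous_on_const
        ustar_continuous[OF basis m1 W_inv]) auto
  have "(\<lambda>v. if v \<le> min x y
      then (\<Sum>i<m. u i x * ustar m Du i v) * (\<Sum>i<m. u i y * ustar m Du i v) else 0) integrable_on {a..b}"
    by (rule truncated_integrable, intro continuous_on_mult cont)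
  moreover have "(\<lambda>v. green m u Du x v * green m u Du y v) = (\<lambda>v. if v \<le> min x y
      then (\<Sum>i<m. u i x * ustar m Du i v) * (\<Sum>i<m. u i y * ustar m Du i v) else 0)"
    by (auto simp: green_def fun_eq_iff)
  ultimately show ?thesis by simp
qed

definition green_combination ::
    "nat \<Rightarrow> (nat \<Rightarrow> real \<Rightarrow> real) \<Rightarrow> (nat \<Rightarrow> nat \<Rightarrow> real \<Rightarrow> real) \<Rightarrow> nat \<Rightarrow> (nat \<Rightarrow> real)
      \<Rightarrow> real vec \<Rightarrow> real \<Rightarrow> real" where
  "green_combination m u Du n t x v = (\<Sum>i<n. x $ i * green m u Du (t i) v)"

lemma kernel_matrix_form:
  assumes basis: "is_ker_basis a b m w u Du" and m1: "1 \<le> m"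
    and W_inv: "\<forall>x\<in>{a..b}. invertible_mat (wronskian m Du x)"
    and K_def: "K = mat n n (\<lambda>(i,j). R1 a b m u Du (t i) (t j))"
    and x: "x \<in> carrier_vec n" and y: "y \<in> carrier_vec n"
  shows "x \<bullet> (K *\<^sub>v y) = integral {a..b}
    (\<lambda>v. green_combination m u Du n t x v * green_combination m u Du n t y v)"
proof -
  let ?G = "\<lambda>i v. green m u Du (t i) v"
  have I: "(\<lambda>v. c * (?G i v * ?G j v)) integrable_on {a..b}" for c i j
    using integrable_on_cmult_left[OF green_product_integrable[OF basis m1 W_inv]] by simp
  have "x \<bullet> (K *\<^sub>v y) = (\<Sum>i<n. x $ i * (\<Sum>j<n. K $$ (i,j) * y $ j))"
    using x y K_def by (simp add: scalar_prod_def lessThan_atLeast0)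
  also have "\<dots> = (\<Sum>i<n. \<Sum>j<n. integral {a..b} (\<lambda>v. (x $ i * y $ j) * (?G i v * ?G j v)))"
    using K_def by (simp add: R1_def sum_distrib_left ac_simps)
  also have "\<dots> = (\<Sum>i<n. integral {a..b} (\<lambda>v. \<Sum>j<n. (x $ i * y $ j) * (?G i v * ?G j v)))"
    by (rule sum.cong[OF refl], rule integral_sum[symmetric]) (auto simp: I)
  also have "\<dots> = integral {a..b} (\<lambda>v. \<Sum>i<n. \<Sum>j<n. (x $ i * y $ j) * (?G i v * ?G j v))"
    by (rule integral_sum[symmetric]) (auto intro!: integrable_sum simp: I)
  also have "\<dots> = integral {a..b}
      (\<lambda>v. green_combination m u Du n t x v * green_combination m u Du n t y v)"
    by (simp add: green_combination_def sum_product ac_simps)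
  finally show ?thesis .
qed

lemma kernel_matrix_symmetric:
  assumes K_def: "K = mat n n (\<lambda>(i,j). R1 a b m u Du (t i) (t j))"
  shows "transpose_mat K = K"
  by (rule eq_matI) (auto simp: K_def R1_def mult.commute)

text \<open>Being a Gram matrix, K is positive semidefinite; being invertible, it is positive definite.\<close>

lemma kernel_matrix_pos_def:
  assumes basis: "is_ker_basis a b m w u Du" and m1: "1 \<le> m"
    and W_inv: "\<forall>x\<in>{a..b}. invertible_mat (wronskian m Du x)"
    and K_def: "K = mat n n (\<lambda>(i,j). R1 a b m u Du (t i) (t j))" and K_inv: "invertible_mat K"
  shows "pos_def n K"
proof -
  have K: "K \<in> carrier_mat n n" unfolding K_def by simp
  have psd: "0 \<le> x \<bullet> (K *\<^sub>v x)" if x: "x \<in> carrier_vec n" for x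
  proof -
    let ?g = "green_combination m u Du n t x"
    have form: "x \<bullet> (K *\<^sub>v x) = integral {a..b} (\<lambda>v. ?g v * ?g v)"
      by (rule kernel_matrix_form[OF basis m1 W_inv K_def x x])
    show ?thesis
    proof (cases "(\<lambda>v. ?g v * ?g v) integrable_on {a..b}")
      case True
      then show ?thesis unfolding form by (rule integral_nonneg) simp
    next
      case False
      then show ?thesis unfolding form not_integrable_integral[OF False] by simp
    qed
  qed
  show ?thesis
    by (rule pos_def_if_psd_invertible[OF K kernel_matrix_symmetric[OF K_def] psd
          invertible_det_nonzero[OF K K_inv]])
qed

lemma knots_strict_mono:
  fixes t :: "nat \<Rightarrow> real"
  assumes t_mono: "\<forall>i. Suc i < n \<longrightarrow> t i < t (Suc i)" and ij: "i < j" and j: "j < n"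
  shows "t i < t j"
  using ij j
proof (induction j)
  case (Suc j)
  then have "t j < t (Suc j)" using t_mono by auto
  moreover have "i = j \<or> i < j" using Suc by auto
  ultimately show ?case using Suc by auto
qed simp

lemma knots_mono:
  fixes t :: "nat \<Rightarrow> real"
  assumes t_mono: "\<forall>i. Suc i < n \<longrightarrow> t i < t (Suc i)" and ij: "i \<le> j" and j: "j < n"
  shows "t i \<le> t j"
  using knots_strict_mono[OF t_mono _ j, of i] ij by (cases "i = j") auto

text \<open>A combination of G(t_k, .), ..., G(t_(k+m), .) whose coefficients annihilate the values
  of the null space basis of L is supported in (t_k, t_(k+m)]: to the left of t_k all terms
  are combinations of the u_p(t_i) and cancel, to the right of t_(k+m) all terms vanish.\<close>

lemma green_combination_support:
  fixes x :: "real vec" and t :: "nat \<Rightarrow> real"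
  assumes t_mono: "\<forall>i. Suc i < n \<longrightarrow> t i < t (Suc i)" and k: "k + m < n"
    and supp: "\<forall>i<n. x $ i \<noteq> 0 \<longrightarrow> k \<le> i \<and> i \<le> k + m"
    and annih: "\<forall>p<m. (\<Sum>i<n. x $ i * u p (t i)) = 0"
    and nz: "green_combination m u Du n t x v \<noteq> 0"
  shows "t k < v \<and> v \<le> t (k + m)"
proof (rule ccontr)
  assume "\<not> (t k < v \<and> v \<le> t (k + m))"
  then consider "v \<le> t k" | "t (k + m) < v" by linarith
  then show False
  proof cases
    case 1
    have "green_combination m u Du n t x v = (\<Sum>i<n. x $ i * (\<Sum>p<m. u p (t i) * ustar m Du p v))"
      unfolding green_combination_def
    proof (rule sum.cong[OF refl])
      fix i assume i: "i \<in> {..<n}"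
      show "x $ i * green m u Du (t i) v = x $ i * (\<Sum>p<m. u p (t i) * ustar m Du p v)"
      proof (cases "x $ i = 0")
        case False
        then have "t k \<le> t i" using supp i knots_mono[OF t_mono] by auto
        then show ?thesis using 1 by (simp add: green_def)
      qed simp
    qed
    also have "\<dots> = (\<Sum>p<m. ustar m Du p v * (\<Sum>i<n. x $ i * u p (t i)))"
      by (simp add: sum_distrib_left sum_distrib_right ac_simps sum.swap[of _ "{..<n}"])
    also have "\<dots> = 0" using annih by simp
    finally show False using nz by simp
  next
    case 2
    have terms_zero: "x $ i * green m u Du (t i) v = 0" if i: "i < n" for i
    proof (cases "x $ i = 0")
      case False
      then have "t i \<le> t (k + m)" using supp i k knots_mono[OF t_mono] by auto
      then show ?thesis using 2 by (simp add: green_def)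
    qed simp
    have "green_combination m u Du n t x v = 0"
      unfolding green_combination_def by (rule sum.neutral) (use terms_zero in auto)
    then show False using nz by simp
  qed
qed

text \<open>For the kernel matrix K, the entry (k,l) of Q'KQ is the L2 inner product of the Green
  combinations of columns k and l of Q, whose supports are disjoint when the bands are.\<close>

lemma banded_kernel_congruence:
  fixes Q T K :: "real mat" and t :: "nat \<Rightarrow> real"
  assumes basis: "is_ker_basis a b m w u Du" and m1: "1 \<le> m"
    and W_inv: "\<forall>x\<in>{a..b}. invertible_mat (wronskian m Du x)"
    and t_mono: "\<forall>i. Suc i < n \<longrightarrow> t i < t (Suc i)"
    and T_def: "T = mat n m (\<lambda>(i,j). u j (t i))"
    and K_def: "K = mat n n (\<lambda>(i,j). R1 a b m u Du (t i) (t j))"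
    and Q: "Q \<in> carrier_mat n (n - m)" and QT: "transpose_mat Q * T = 0\<^sub>m (n - m) m"
    and Q_band: "\<forall>i<n. \<forall>j<n - m. Q $$ (i,j) \<noteq> 0 \<longrightarrow> j \<le> i \<and> i \<le> j + m"
    and k: "k < n - m" and l: "l < n - m" and far: "k > l + m \<or> l > k + m"
  shows "(transpose_mat Q * K * Q) $$ (k,l) = 0"
proof -
  let ?g = "\<lambda>j. green_combination m u Du n t (col Q j)"
  have support: "t j < v \<and> v \<le> t (j + m)" if j: "j < n - m" and nz: "?g j v \<noteq> 0" for j v
  proof (rule green_combination_support[OF t_mono _ _ _ nz])
    show "\<forall>i<n. col Q j $ i \<noteq> 0 \<longrightarrow> j \<le> i \<and> i \<le> j + m" using Q_band Q j by auto
    show "\<forall>p<m. (\<Sum>i<n. col Q j $ i * u p (t i)) = 0"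
    proof (intro allI impI)
      fix p assume p: "p < m"
      have "(transpose_mat Q * T) $$ (j,p) = (\<Sum>i<n. col Q j $ i * u p (t i))"
        using Q j p T_def by (simp add: scalar_prod_def lessThan_atLeast0)
      then show "(\<Sum>i<n. col Q j $ i * u p (t i)) = 0" using QT j p by simp
    qed
  qed (use j in simp)
  have disjoint: "?g k v * ?g l v = 0" for v
  proof (rule ccontr)
    assume "?g k v * ?g l v \<noteq> 0"
    then have "t k < v \<and> v \<le> t (k + m)" "t l < v \<and> v \<le> t (l + m)"
      using support[OF k] support[OF l] by auto
    moreover have "t (l + m) < t k" if "k > l + m" using knots_strict_mono[OF t_mono that] k by simp
    moreover have "t (k + m) < t l" if "l > k + m" using knots_strict_mono[OF t_mono that] l by simp
    ultimately show False using far by fastforce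
  qed
  have "col Q k \<bullet> (K *\<^sub>v col Q l) = integral {a..b} (\<lambda>v. ?g k v * ?g l v)"
    using kernel_matrix_form[OF basis m1 W_inv K_def, of "col Q k" "col Q l"] Q k l by simp
  also have "\<dots> = 0" unfolding disjoint by simp
  finally have "col Q k \<bullet> (K *\<^sub>v col Q l) = 0" .
  moreover have "K \<in> carrier_mat n n" unfolding K_def by simp
  ultimately show ?thesis using congruence_entry[OF _ Q k l, of K] by simp
qed

lemma banded_congruences:
  fixes Q T K D :: "real mat" and t :: "nat \<Rightarrow> real"
  assumes basis: "is_ker_basis a b m w u Du" and m1: "1 \<le> m"
    and W_inv: "\<forall>x\<in>{a..b}. invertible_mat (wronskian m Du x)"
    and t_mono: "\<forall>i. Suc i < n \<longrightarrow> t i < t (Suc i)"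
    and T_def: "T = mat n m (\<lambda>(i,j). u j (t i))"
    and K_def: "K = mat n n (\<lambda>(i,j). R1 a b m u Du (t i) (t j))"
    and D: "D \<in> carrier_mat n n" and D_diag: "diagonal_mat D" and D_pos: "\<forall>i<n. D $$ (i,i) > 0"
    and Q: "Q \<in> carrier_mat n (n - m)" and QT: "transpose_mat Q * T = 0\<^sub>m (n - m) m"
    and Q_band: "\<forall>i<n. \<forall>j<n - m. Q $$ (i,j) \<noteq> 0 \<longrightarrow> j \<le> i \<and> i \<le> j + m"
    and k: "k < n - m" and l: "l < n - m" and far: "k > l + m \<or> l > k + m"
  shows "(transpose_mat Q * (K + lam \<cdot>\<^sub>m minv D) * Q) $$ (k,l) = 0 \<and>
    (transpose_mat Q * K * Q) $$ (k,l) = 0 \<and> (transpose_mat Q * minv D * Q) $$ (k,l) = 0"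
proof -
  note E = minv_diagonal[OF D D_diag D_pos]
  have K: "K \<in> carrier_mat n n" unfolding K_def by simp
  have "(transpose_mat Q * K * Q) $$ (k,l) = 0"
    by (rule banded_kernel_congruence[OF basis m1 W_inv t_mono T_def K_def Q QT Q_band k l far])
  moreover have "(transpose_mat Q * minv D * Q) $$ (k,l) = 0"
    by (rule banded_diagonal_congruence[OF E(1) E(3) Q Q_band k l far])
  ultimately show ?thesis unfolding congruence_entry_add_smult[OF K E(1) Q k l] by simp
qed

theorem mainTheorem11:
  fixes a b lam :: real and m n :: nat
    and w :: "nat \<Rightarrow> real \<Rightarrow> real"
    and u :: "nat \<Rightarrow> real \<Rightarrow> real" and Du :: "nat \<Rightarrow> nat \<Rightarrow> real \<Rightarrow> real"
    and t :: "nat \<Rightarrow> real"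
    and T K D Q :: "real mat" and Y :: "real vec"
  assumes ab: "a < b" and m1: "1 \<le> m"
    and w_cont: "\<forall>j<m. continuous_on {a..b} (w j)"
    and basis: "is_ker_basis a b m w u Du"
    and W_inv: "\<forall>x\<in>{a..b}. invertible_mat (wronskian m Du x)"
    and nm: "n > m"
    and t_lo: "a < t 0" and t_mono: "\<forall>i. Suc i < n \<longrightarrow> t i < t (Suc i)" and t_hi: "t (n - 1) < b"
    and T_def: "T = mat n m (\<lambda>(i,j). u j (t i))"
    and T_rank: "vec_space.rank n T = m"
    and K_def: "K = mat n n (\<lambda>(i,j). R1 a b m u Du (t i) (t j))"
    and K_inv: "invertible_mat K"
    and D_carrier: "D \<in> carrier_mat n n" and D_diag: "diagonal_mat D"
    and D_pos: "\<forall>i<n. D $$ (i,i) > 0"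
    and lam: "lam > 0"
    and Q_carrier: "Q \<in> carrier_mat n (n - m)"
    and Q_rank: "vec_space.rank n Q = n - m"
    and QT: "transpose_mat Q * T = 0\<^sub>m (n - m) m"
    and Q_band: "\<forall>i<n. \<forall>j<n - m. Q $$ (i,j) \<noteq> 0 \<longrightarrow> j \<le> i \<and> i \<le> j + m"
    and Y: "Y \<in> carrier_vec n"
  shows
    "(let M = K + lam \<cdot>\<^sub>m minv D in
      (\<forall>k<n - m. \<forall>l<n - m. (k > l + m \<or> l > k + m) \<longrightarrow>
          (transpose_mat Q * M * Q) $$ (k,l) = 0 \<and>
          (transpose_mat Q * K * Q) $$ (k,l) = 0 \<and>
          (transpose_mat Q * minv D * Q) $$ (k,l) = 0) \<and>
      (\<exists>!p. is_ridge_minimizer n m Y T K D lam p) \<and>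
      (\<forall>\<alpha> \<beta>. is_ridge_minimizer n m Y T K D lam (\<alpha>, \<beta>) \<longrightarrow>
          transpose_mat T *\<^sub>v \<beta> = 0\<^sub>v m \<and>
          \<beta> = Q * minv (transpose_mat Q * M * Q) * transpose_mat Q *\<^sub>v Y \<and>
          \<alpha> = minv (transpose_mat T * T) * transpose_mat T *\<^sub>v (Y - M *\<^sub>v \<beta>) \<and>
          T *\<^sub>v \<alpha> + K *\<^sub>v \<beta> = Y - lam \<cdot>\<^sub>v (minv D *\<^sub>v \<beta>)))"
proof -
  have T: "T \<in> carrier_mat n m" unfolding T_def by simp
  have K: "K \<in> carrier_mat n n" unfolding K_def by simp
  have dim: "m + (n - m) = n" using nm by simp
  note E = minv_diagonal[OF D_carrier D_diag D_pos]
  have pdK: "pos_def n K" by (rule kernel_matrix_pos_def[OF basis m1 W_inv K_def K_inv])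
  define M where "M = K + lam \<cdot>\<^sub>m minv D"
  have M: "M \<in> carrier_mat n n" unfolding M_def using K E(1) by simp
  have pdM: "pos_def n M" unfolding M_def
    by (rule pos_def_add_smult[OF K E(1) pdK pos_def_diagonal[OF E(1) E(3) E(4)] lam])
  have band: "(transpose_mat Q * M * Q) $$ (k,l) = 0 \<and> (transpose_mat Q * K * Q) $$ (k,l) = 0 \<and>
      (transpose_mat Q * minv D * Q) $$ (k,l) = 0"
    if "k < n - m" "l < n - m" "k > l + m \<or> l > k + m" for k l
    unfolding M_def by (rule banded_congruences[OF basis m1 W_inv t_mono T_def K_def D_carrier D_diag
        D_pos Q_carrier QT Q_band that])
  define \<beta>\<^sub>0 where "\<beta>\<^sub>0 = Q * minv (transpose_mat Q * M * Q) * transpose_mat Q *\<^sub>v Y"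
  define \<alpha>\<^sub>0 where "\<alpha>\<^sub>0 = minv (transpose_mat T * T) * transpose_mat T *\<^sub>v (Y - M *\<^sub>v \<beta>\<^sub>0)"
  note sol = ridge_solution[OF T Q_carrier dim T_rank Q_rank QT M pdM Y \<beta>\<^sub>0_def \<alpha>\<^sub>0_def]
  note fit = fitted_values[OF T K E(1) D_carrier E(2) Y sol(1,2) sol(4)[unfolded M_def]]
  have minimizer: "is_ridge_minimizer n m Y T K D lam p \<longleftrightarrow> p = (\<alpha>\<^sub>0, \<beta>\<^sub>0)" for p
    by (rule ridge_unique_minimizer[OF T T_rank K kernel_matrix_symmetric[OF K_def] pdK D_carrier
          diagonal_transpose[OF D_carrier D_diag] pos_def_diagonal[OF D_carrier D_diag D_pos] lam Y
          sol(1,2,3) fit(2)])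
  show ?thesis
    unfolding Let_def M_def[symmetric] minimizer using band sol(3) fit(1)
    by (auto simp: \<beta>\<^sub>0_def \<alpha>\<^sub>0_def)
qed

end
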